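(* Suppose $X,Y,Z \in \Omega(\Sigma)$ are three complementary regions meeting at a vertex $v \in V(\Sigma)$, and that the arrows on the edges $X \cap Y$ and $X \cap Z$ arising from the flow $f_\rho$ both point away from $v$. Then either $|x| \le 2$, or $y=z=0$.
   Context: Let $T$ be the one-holed torus with fundamental group $\pi$ free on two generators, and let $\rho:\pi\to \mathrm{SL}(2,\mathbb{C})$ be a representation (character) with $\operatorname{tr}\rho(XYX^{-1}Y^{-1})=\kappa$ for a pair of generators $X,Y$, where $\kappa \neq 2$. Let $\mathscr{C}$ be the set of free homotopy classes of essential simple closed curves on $T$, identified with the vertices of the Farey tessellation of the hyperbolic plane; let $\Sigma$ be the dual infinite trivalent tree, with vertex set $V(\Sigma)$, edge set $E(\Sigma)$, and set of complementary regions $\Omega(\Sigma)$, so that $\Omega(\Sigma)$ is in natural bijection with $\mathscr{C}$, vertices of $\Sigma$ correspond to triples of pairwise adjacent regions (generating triples), and each edge $e$ corresponds to a generating quadruple $(X,Y;Z,Z')$: $e=X\cap Y$ is the common boundary of regions $X,Y$, and $Z,Z'$ are the two regions meeting the two endpoints of $e$. The Fricke trace map $\phi:\Omega(\Sigma)\to\mathbb{C}$ is $\phi(W)=\operatorname{tr}\rho(W)$, and we write $x=\phi(X)$, $y=\phi(Y)$, $z=\phi(Z)$, etc. It satisfies the edge relation $z+z'=xy$ for every generating quadruple $(X,Y;Z,Z')$. The flow $f_\rho$ assigns to each edge $e \leftrightarrow (X,Y;Z,Z')$ the direction pointing from $Z$ towards $Z'$ if $|z|\ge|z'|$ (i.e.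 from the region with larger $|\phi|$ to the one with smaller $|\phi|$; ties are directed arbitrarily). *)

theory Defs
  imports Complex_Main "HOL-Computational_Algebra.Primes"
begin

text \<open>Complementary regions of the dual tree \<open>\<Sigma>\<close> = vertices of the Farey tessellation
  = extended rationals p/q, represented by the normalized coprime pair (p,q) with q > 0,
  or (1,0) for 1/0 = \<infinity>.\<close>
type_synonym region = "int \<times> int"

definition farey_region :: "region \<Rightarrow> bool" where
  "farey_region r \<longleftrightarrow> coprime (fst r) (snd r) \<and> (snd r > 0 \<or> r = (1, 0))"

text \<open>Two regions are adjacent (share an edge of \<open>\<Sigma>\<close>) iff the Farey vertices are joined
  by a Farey edge, i.e. the determinant is \<open>\<plusminus>1\<close>.\<close>
definition farey_adj :: "region \<Rightarrow> region \<Rightarrow> bool" where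
  "farey_adj X Y \<longleftrightarrow> farey_region X \<and> farey_region Y \<and>
     \<bar>fst X * snd Y - snd X * fst Y\<bar> = 1"

text \<open>Vertices of \<open>\<Sigma>\<close>: triples of pairwise adjacent regions (generating triples).\<close>
definition sigma_vertex :: "region \<Rightarrow> region \<Rightarrow> region \<Rightarrow> bool" where
  "sigma_vertex X Y Z \<longleftrightarrow> farey_adj X Y \<and> farey_adj Y Z \<and> farey_adj X Z"

text \<open>Generating quadruple \<open>(X,Y;Z,Z')\<close> for the edge \<open>e = X \<inter> Y\<close>: Z and Z' are the two
  regions meeting the two endpoints of e.\<close>
definition gen_quadruple :: "region \<Rightarrow> region \<Rightarrow> region \<Rightarrow> region \<Rightarrow> bool" where
  "gen_quadruple X Y Z Z' \<longleftrightarrow> sigma_vertex X Y Z \<and> sigma_vertex X Y Z' \<and> Z \<noteq> Z'"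

definition fricke_trace_map :: "complex \<Rightarrow> (region \<Rightarrow> complex) \<Rightarrow> bool" where
  "fricke_trace_map \<kappa> \<phi> \<longleftrightarrow>
     (\<forall>X Y Z Z'. gen_quadruple X Y Z Z' \<longrightarrow> \<phi> Z + \<phi> Z' = \<phi> X * \<phi> Y) \<and>
     (\<forall>X Y Z. sigma_vertex X Y Z \<longrightarrow>
        (\<phi> X)\<^sup>2 + (\<phi> Y)\<^sup>2 + (\<phi> Z)\<^sup>2 - \<phi> X * \<phi> Y * \<phi> Z = \<kappa> + 2)"

text \<open>The flow \<open>f\<^sub>\<rho>\<close>: to the edge \<open>{X,Y}\<close> with generating quadruple \<open>(X,Y;Z,Z')\<close> it
  assigns the region (Z or Z') towards whose endpoint the arrow points; the arrow points
  from the region with larger \<open>|\<phi>|\<close> to the one with smaller \<open>|\<phi>|\<close>, ties arbitrary.\<close>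
definition is_flow :: "(region \<Rightarrow> complex) \<Rightarrow> (region set \<Rightarrow> region) \<Rightarrow> bool" where
  "is_flow \<phi> f \<longleftrightarrow>
     (\<forall>X Y Z Z'. gen_quadruple X Y Z Z' \<longrightarrow>
        f {X, Y} \<in> {Z, Z'} \<and> (norm (\<phi> Z') < norm (\<phi> Z) \<longrightarrow> f {X, Y} = Z'))"

definition points_away :: "(region set \<Rightarrow> region) \<Rightarrow> region \<Rightarrow> region \<Rightarrow> region \<Rightarrow> bool" where
  "points_away f X Y Z \<longleftrightarrow> f {X, Y} \<noteq> Z"

end

theory Submission
  imports Defs
begin

text \<open>At the far ends of the edges \<open>X \<inter> Y\<close> and \<open>X \<inter> Z\<close> lie regions W and V with
  \<open>w = xy - z\<close> and \<open>v = xz - y\<close> by the edge relation. Arrows pointing away from the vertex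
  mean \<open>|w| \<le> |z|\<close> and \<open>|v| \<le> |y|\<close>, so the triangle inequality gives \<open>|x||y| \<le> 2|z|\<close> and
  \<open>|x||z| \<le> 2|y|\<close>. Hence \<open>|x|\<^sup>2|z| \<le> 4|z|\<close> and \<open>|x|\<^sup>2|y| \<le> 4|y|\<close>, which forces
  \<open>y = z = 0\<close> as soon as \<open>|x| > 2\<close>.\<close>

definition farey_det :: "region \<Rightarrow> region \<Rightarrow> int" where
  "farey_det A B = fst A * snd B - snd A * fst B"

lemma farey_adj_iff:
  "farey_adj X Y \<longleftrightarrow> farey_region X \<and> farey_region Y \<and> \<bar>farey_det X Y\<bar> = 1"
  by (simp add: farey_adj_def farey_det_def)

lemma abs_farey_det_commute: "\<bar>farey_det B A\<bar> = \<bar>farey_det A B\<bar>"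
  by (simp add: farey_det_def abs_minus_commute mult.commute)

lemma farey_adj_commute: "farey_adj X Y \<longleftrightarrow> farey_adj Y X"
  by (auto simp: farey_adj_iff abs_farey_det_commute)

lemma sigma_vertex_swap: "sigma_vertex X Y Z \<Longrightarrow> sigma_vertex X Z Y"
  by (auto simp: sigma_vertex_def farey_adj_commute)

lemma coprime_if_abs_farey_det_eq_1:
  assumes "\<bar>farey_det A B\<bar> = 1"
  shows "coprime (fst B) (snd B)"
proof -
  have "gcd (fst B) (snd B) dvd farey_det A B"
    by (simp add: farey_det_def)
  moreover have "is_unit (farey_det A B)"
    using assms by simp
  ultimately have "is_unit (gcd (fst B) (snd B))"
    by (rule dvd_unit_imp_unit)
  then show ?thesis
    by (simp add: coprime_iff_gcd_eq_1)
qed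

definition farey_normalize :: "int \<times> int \<Rightarrow> region" where
  "farey_normalize r =
     (if snd r > 0 \<or> (snd r = 0 \<and> fst r > 0) then r else (- fst r, - snd r))"

lemma farey_normalize_cases:
  "farey_normalize r = r \<or> farey_normalize r = (- fst r, - snd r)"
  by (simp add: farey_normalize_def)

lemma farey_region_normalize:
  assumes "coprime (fst r) (snd r)"
  shows "farey_region (farey_normalize r)"
proof (cases "snd r = 0")
  case True
  then have "\<bar>fst r\<bar> = 1"
    using assms by simp
  with True show ?thesis
    by (auto simp: farey_region_def farey_normalize_def prod_eq_iff abs_if split: if_splits)
qed (use assms in \<open>auto simp: farey_region_def farey_normalize_def\<close>)

lemma abs_farey_det_normalize: "\<bar>farey_det A (farey_normalize r)\<bar> = \<bar>farey_det A r\<bar>"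
  using farey_normalize_cases[of r] by (auto simp: farey_det_def abs_minus_commute)

lemma farey_adj_normalize:
  assumes "farey_region X" and "\<bar>farey_det X r\<bar> = 1"
  shows "farey_adj X (farey_normalize r)"
  using assms coprime_if_abs_farey_det_eq_1[of X r]
  by (simp add: farey_adj_iff abs_farey_det_normalize farey_region_normalize)

text \<open>The regions at the two ends of the edge \<open>X \<inter> Y\<close> are the mediants \<open>X \<plusminus> Y\<close>.\<close>
lemma sigma_vertex_mediant:
  assumes "farey_adj X Y" and "\<bar>s\<bar> = 1"
  shows "sigma_vertex X Y (farey_normalize (fst X + s * fst Y, snd X + s * snd Y))"
proof -
  let ?m = "(fst X + s * fst Y, snd X + s * snd Y)"
  have X: "farey_region X" and Y: "farey_region Y" and XY: "\<bar>farey_det X Y\<bar> = 1"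
    using assms(1) by (simp_all add: farey_adj_iff)
  have "\<bar>farey_det X ?m\<bar> = \<bar>s\<bar> * \<bar>farey_det X Y\<bar>"
    by (simp add: farey_det_def algebra_simps flip: abs_mult)
  then have "farey_adj X (farey_normalize ?m)"
    using X XY assms(2) by (simp add: farey_adj_normalize)
  moreover have "farey_det Y ?m = farey_det Y X"
    by (simp add: farey_det_def algebra_simps)
  then have "farey_adj Y (farey_normalize ?m)"
    using Y XY abs_farey_det_commute[of X Y] by (simp add: farey_adj_normalize)
  ultimately show ?thesis
    using assms(1) by (simp add: sigma_vertex_def)
qed

lemma farey_region_nonzero: "farey_region X \<Longrightarrow> X \<noteq> (0, 0)"
  by (auto simp: farey_region_def)

lemma farey_normalize_mediants_distinct:
  assumes "farey_region X" and "farey_region Y"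
  shows "farey_normalize (fst X + fst Y, snd X + snd Y)
    \<noteq> farey_normalize (fst X - fst Y, snd X - snd Y)"
  using farey_normalize_cases[of "(fst X + fst Y, snd X + snd Y)"]
    farey_normalize_cases[of "(fst X - fst Y, snd X - snd Y)"]
    farey_region_nonzero[OF assms(1)] farey_region_nonzero[OF assms(2)]
  by (auto simp: prod_eq_iff)

lemma ex_gen_quadruple:
  assumes "sigma_vertex X Y Z"
  shows "\<exists>W. gen_quadruple X Y Z W"
proof -
  have adj: "farey_adj X Y"
    using assms by (simp add: sigma_vertex_def)
  then have regions: "farey_region X" "farey_region Y"
    by (simp_all add: farey_adj_iff)
  obtain s :: int where "\<bar>s\<bar> = 1"
    and "farey_normalize (fst X + s * fst Y, snd X + s * snd Y) \<noteq> Z"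
  proof (cases "farey_normalize (fst X + fst Y, snd X + snd Y) = Z")
    case True
    then show ?thesis
      using that[of "-1"] farey_normalize_mediants_distinct[OF regions] by simp
  next
    case False
    then show ?thesis
      using that[of 1] by simp
  qed
  with adj assms show ?thesis
    unfolding gen_quadruple_def by (blast intro: sigma_vertex_mediant)
qed

lemma eq_0_if_norm_mult_diff_le:
  fixes x y z :: complex
  assumes "norm (x * y - z) \<le> norm z" and "norm (x * z - y) \<le> norm y" and "norm x > 2"
  shows "y = 0 \<and> z = 0"
proof -
  have yz: "norm x * norm y \<le> 2 * norm z"
    using norm_triangle_ineq[of "x * y - z" z] assms(1) by (simp add: norm_mult)
  have zy: "norm x * norm z \<le> 2 * norm y"
    using norm_triangle_ineq[of "x * z - y" y] assms(2) by (simp add: norm_mult)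
  have vanish: "t = 0" if "norm x * norm x * t \<le> 4 * t" and "0 \<le> t" for t :: real
  proof (rule ccontr)
    assume "t \<noteq> 0"
    have "2 * 2 < norm x * norm x"
      using assms(3) by (intro mult_strict_mono) auto
    then have "4 * t < norm x * norm x * t"
      using \<open>t \<noteq> 0\<close> \<open>0 \<le> t\<close> by (intro mult_strict_right_mono) auto
    then show False using that(1) by simp
  qed
  have "norm x * norm x * norm z \<le> norm x * (2 * norm y)"
    using mult_left_mono[OF zy, of "norm x"] by (simp add: mult.assoc)
  also have "\<dots> \<le> 4 * norm z"
    using yz by simp
  finally have "norm z = 0"
    by (rule vanish) simp
  have "norm x * norm x * norm y \<le> norm x * (2 * norm z)"
    using mult_left_mono[OF yz, of "norm x"] by (simp add: mult.assoc)
  also have "\<dots> \<le> 4 * norm y"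
    using zy by simp
  finally have "norm y = 0"
    by (rule vanish) simp
  with \<open>norm z = 0\<close> show ?thesis by simp
qed

lemma fricke_edge_relation:
  assumes "fricke_trace_map \<kappa> \<phi>" and "gen_quadruple X Y Z W"
  shows "\<phi> W = \<phi> X * \<phi> Y - \<phi> Z"
proof -
  have "\<phi> Z + \<phi> W = \<phi> X * \<phi> Y"
    using assms unfolding fricke_trace_map_def by blast
  then show ?thesis
    by (simp add: eq_diff_eq add.commute)
qed

lemma norm_le_if_points_away:
  assumes "is_flow \<phi> f" and "gen_quadruple X Y Z W" and "points_away f X Y Z"
  shows "norm (\<phi> W) \<le> norm (\<phi> Z)"
proof -
  have "gen_quadruple X Y W Z"
    using assms(2) by (auto simp: gen_quadruple_def)
  with assms(1,3) show ?thesis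
    unfolding is_flow_def points_away_def by (meson not_le)
qed

theorem proposition3p3:
  fixes \<kappa> :: complex and \<phi> :: "region \<Rightarrow> complex" and f :: "region set \<Rightarrow> region"
    and X Y Z :: region
  assumes "\<kappa> \<noteq> 2"
    and "fricke_trace_map \<kappa> \<phi>"
    and "is_flow \<phi> f"
    and "sigma_vertex X Y Z"
    and "points_away f X Y Z"
    and "points_away f X Z Y"
  shows "norm (\<phi> X) \<le> 2 \<or> (\<phi> Y = 0 \<and> \<phi> Z = 0)"
proof -
  obtain W where W: "gen_quadruple X Y Z W"
    using ex_gen_quadruple assms(4) by blast
  obtain V where V: "gen_quadruple X Z Y V"
    using ex_gen_quadruple sigma_vertex_swap assms(4) by blast
  have "norm (\<phi> X * \<phi> Y - \<phi> Z) \<le> norm (\<phi> Z)"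
    using norm_le_if_points_away[OF assms(3) W assms(5)] fricke_edge_relation[OF assms(2) W]
    by simp
  moreover have "norm (\<phi> X * \<phi> Z - \<phi> Y) \<le> norm (\<phi> Y)"
    using norm_le_if_points_away[OF assms(3) V assms(6)] fricke_edge_relation[OF assms(2) V]
    by simp
  ultimately show ?thesis
    using eq_0_if_norm_mult_diff_le by fastforce
qed

end
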